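(* In the setting of the context, let $(h_1',h_2')\in\mathbb C(s)^2$ be a nonzero pair with $\widetilde\gamma_1h_1'+\widetilde\gamma_2h_2'=0$, $(h_1')^{\iota_1}=\pm h_1'$ and $(h_2')^{\iota_2}=\pm h_2'$. If $(h_1')^{\iota_1}=h_1'$ or $(h_2')^{\iota_2}=h_2'$, then the only pair $(h_1,h_2)\in\mathbb C(s)^2$ with $\widetilde\gamma_1h_1+\widetilde\gamma_2h_2=0$, $h_1^{\iota_1}=-h_1$ and $h_2^{\iota_2}=-h_2$ is $(0,0)$.
   Context: For a genus-zero weighted quadrant walk model (step set one of the five genus-zero sets, step weights $d_{i,j}>0$, Boltzmann weights $a,b>0$), $A=1-1/a$, $B=1-1/b$; $s\mapsto(x(s),y(s))$ is a fixed rational parametrization by $\mathbb P^1$ of the kernel curve (for a fixed real $t$ transcendental over $\mathbb Q((d_{i,j}),a,b)$), with $x(1/s)=x(s)$, $y(q/s)=y(s)$ for a fixed real $q$ not a root of unity. $\iota_1(s)=1/s$, $\iota_2(s)=q/s$, $\sigma=\iota_2\circ\iota_1$, $h^\tau=h\circ\tau$. It is known that the only elements of $\mathbb C(s)$ fixed by both $\iota_1$ and $\iota_2$ (equivalently by $\sigma$) are the constants. $\widetilde\gamma_1=A/x(s)-td_{1,-1}/y(s)$, $\widetilde\gamma_2=B/y(s)-td_{-1,1}/x(s)$. *)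

theory Defs
  imports "HOL-Computational_Algebra.Polynomial" "HOL-Computational_Algebra.Fraction_Field"
begin

type_synonym ratfun = "complex poly fract"

definition rf_const :: "complex \<Rightarrow> ratfun" where
  "rf_const c = Fract [:c:] 1"

definition rf_real :: "real \<Rightarrow> ratfun" where
  "rf_real r = rf_const (complex_of_real r)"

text \<open>For a polynomial p of degree n: s^n * p(c/s), a polynomial in s.\<close>
definition poly_inv_sub :: "complex \<Rightarrow> complex poly \<Rightarrow> complex poly" where
  "poly_inv_sub c p = (\<Sum>i\<le>degree p. monom (coeff p i * c ^ i) (degree p - i))"

text \<open>Substitution s := c/s in a rational function: for f = p/r,
  f(c/s) = p(c/s)/r(c/s) = (s^deg r * s^deg p p(c/s)) / (s^deg p * s^deg r r(c/s)).
  The value does not depend on the chosen representative.\<close>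
definition rf_inv_sub :: "complex \<Rightarrow> ratfun \<Rightarrow> ratfun" where
  "rf_inv_sub c f =
     (let (p, r) = (SOME (p, r). r \<noteq> 0 \<and> f = Fract p r)
      in Fract (poly_inv_sub c p * [:0, 1:] ^ degree r)
               (poly_inv_sub c r * [:0, 1:] ^ degree p))"

definition iota1 :: "ratfun \<Rightarrow> ratfun" where
  "iota1 h = rf_inv_sub 1 h"

definition iota2 :: "real \<Rightarrow> ratfun \<Rightarrow> ratfun" where
  "iota2 q h = rf_inv_sub (complex_of_real q) h"

text \<open>The genus-zero step sets: NW and SE steps plus a nonempty subset of {N, E, NE}
  (the five genus-zero models, counted up to the symmetry x <-> y).\<close>
definition genus_zero_step_sets :: "(int \<times> int) set set" where
  "genus_zero_step_sets =
     {insert (-1, 1) (insert (1, -1) T) | T. T \<subseteq> {(0, 1), (1, 0), (1, 1)} \<and> T \<noteq> {}}"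

inductive_set base_field :: "(int \<Rightarrow> int \<Rightarrow> real) \<Rightarrow> real \<Rightarrow> real \<Rightarrow> real set"
  for d :: "int \<Rightarrow> int \<Rightarrow> real" and a b :: real where
  bf_rat: "r \<in> \<rat> \<Longrightarrow> r \<in> base_field d a b"
| bf_d: "d i j \<in> base_field d a b"
| bf_a: "a \<in> base_field d a b"
| bf_b: "b \<in> base_field d a b"
| bf_add: "u \<in> base_field d a b \<Longrightarrow> v \<in> base_field d a b \<Longrightarrow> u + v \<in> base_field d a b"
| bf_mult: "u \<in> base_field d a b \<Longrightarrow> v \<in> base_field d a b \<Longrightarrow> u * v \<in> base_field d a b"
| bf_uminus: "u \<in> base_field d a b \<Longrightarrow> - u \<in> base_field d a b"
| bf_inverse: "u \<in> base_field d a b \<Longrightarrow> inverse u \<in> base_field d a b"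

definition transcendental_over :: "real set \<Rightarrow> real \<Rightarrow> bool" where
  "transcendental_over F t \<longleftrightarrow>
     (\<forall>p :: real poly. p \<noteq> 0 \<and> (\<forall>i. coeff p i \<in> F) \<longrightarrow> poly p t \<noteq> 0)"

definition gamma1 :: "(int \<Rightarrow> int \<Rightarrow> real) \<Rightarrow> real \<Rightarrow> real \<Rightarrow> ratfun \<Rightarrow> ratfun \<Rightarrow> ratfun" where
  "gamma1 d a t x y = rf_real (1 - 1 / a) / x - rf_real (t * d 1 (-1)) / y"

definition gamma2 :: "(int \<Rightarrow> int \<Rightarrow> real) \<Rightarrow> real \<Rightarrow> real \<Rightarrow> ratfun \<Rightarrow> ratfun \<Rightarrow> ratfun" where
  "gamma2 d b t x y = rf_real (1 - 1 / b) / y - rf_real (t * d (-1) 1) / x"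

end

theory Submission
  imports Defs
begin

text \<open>
  Neither coefficient gamma1, gamma2 vanishes: if A/x = t d(1,-1)/y, then y is a constant
  multiple of x, the kernel equation becomes a quadratic with constant coefficients satisfied
  by x, which is then non-constant, so all its coefficients vanish, and this forces
  A - A^2 = d(1,-1) d(-1,1) t^2, contradicting the transcendence of t. Hence the solutions of
  gamma1 h1 + gamma2 h2 = 0 form a line: (h1, h2) = f (h1', h2'). The parities of h and h'
  make f even or odd under each involution, so f^2 is fixed by both and hence constant.
  Thus f is constant, hence even, while it is odd under an involution for which h' is even;
  so f = 0.
\<close>

section \<open>The substitution s := c/s\<close>

lemma poly_inv_sub_eq_reflect_poly:
  assumes "c \<noteq> 0"
  shows "poly_inv_sub c p = reflect_poly (p \<circ>\<^sub>p [:0, c:])"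
proof (rule poly_eqI)
  fix n
  let ?d = "degree p"
  have "coeff (poly_inv_sub c p) n = (\<Sum>i\<le>?d. if i = ?d - n \<and> n \<le> ?d then coeff p i * c ^ i else 0)"
    unfolding poly_inv_sub_def coeff_sum coeff_monom by (intro sum.cong) auto
  also have "\<dots> = coeff (reflect_poly (p \<circ>\<^sub>p [:0, c:])) n"
    using assms by (auto simp: coeff_reflect_poly degree_pcompose coeff_pcompose_linear mult.commute)
  finally show "coeff (poly_inv_sub c p) n = coeff (reflect_poly (p \<circ>\<^sub>p [:0, c:])) n" .
qed

lemma poly_inv_sub_mult:
  "c \<noteq> 0 \<Longrightarrow> poly_inv_sub c (p * r) = poly_inv_sub c p * poly_inv_sub c r"
  by (simp add: poly_inv_sub_eq_reflect_poly pcompose_mult reflect_poly_mult)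

lemma poly_inv_sub_eq_0_iff: "c \<noteq> 0 \<Longrightarrow> poly_inv_sub c p = 0 \<longleftrightarrow> p = 0"
  by (simp add: poly_inv_sub_eq_reflect_poly pcompose_eq_0_iff)

lemma Fract_poly_inv_sub_cong:
  fixes p r p' r' :: "complex poly"
  assumes c: "c \<noteq> 0" and r: "r \<noteq> 0" "r' \<noteq> 0" and cross: "p * r' = p' * r"
  shows "Fract (poly_inv_sub c p * [:0, 1:] ^ degree r) (poly_inv_sub c r * [:0, 1:] ^ degree p)
       = Fract (poly_inv_sub c p' * [:0, 1:] ^ degree r') (poly_inv_sub c r' * [:0, 1:] ^ degree p')"
proof (cases "p = 0")
  case True
  with cross r have "p' = 0" by simp
  with True show ?thesis by (simp add: poly_inv_sub_eq_reflect_poly c eq_fract)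
next
  case False
  with cross r have "p' \<noteq> 0" by auto
  with False cross r have deg: "degree p + degree r' = degree p' + degree r"
    by (metis degree_mult_eq)
  from cross c have "poly_inv_sub c p * poly_inv_sub c r' = poly_inv_sub c p' * poly_inv_sub c r"
    by (metis poly_inv_sub_mult)
  then have "poly_inv_sub c p * [:0, 1:] ^ degree r * (poly_inv_sub c r' * [:0, 1:] ^ degree p')
      = (poly_inv_sub c p' * poly_inv_sub c r) * [:0, 1:] ^ (degree r + degree p')"
    by (simp add: power_add mult_ac)
  also have "\<dots> = poly_inv_sub c p' * [:0, 1:] ^ degree r' * (poly_inv_sub c r * [:0, 1:] ^ degree p)"
    using deg by (simp add: power_add[symmetric] mult_ac add.commute)
  finally show ?thesis using c r by (simp add: eq_fract poly_inv_sub_eq_0_iff)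
qed

lemma rf_inv_sub_Fract:
  assumes c: "c \<noteq> 0" and r: "r \<noteq> 0"
  shows "rf_inv_sub c (Fract p r) =
    Fract (poly_inv_sub c p * [:0, 1:] ^ degree r) (poly_inv_sub c r * [:0, 1:] ^ degree p)"
proof -
  obtain p' r' where chosen: "(SOME (p', r'). r' \<noteq> 0 \<and> Fract p r = Fract p' r') = (p', r')"
    by (metis surj_pair)
  have "\<exists>pr. case pr of (p', r') \<Rightarrow> r' \<noteq> 0 \<and> Fract p r = Fract p' r'"
    using r by blast
  from someI_ex[OF this] chosen have r': "r' \<noteq> 0" and "Fract p r = Fract p' r'"
    by auto
  with r have "p' * r = p * r'" by (simp add: eq_fract)
  then show ?thesis
    unfolding rf_inv_sub_def Let_def chosen prod.case
    by (rule Fract_poly_inv_sub_cong[OF c r' r])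
qed

lemma rf_inv_sub_mult:
  assumes "c \<noteq> 0"
  shows "rf_inv_sub c (f * g) = rf_inv_sub c f * rf_inv_sub c g"
proof -
  obtain p r where f: "f = Fract p r" "r \<noteq> 0" by (cases f)
  obtain p' r' where g: "g = Fract p' r'" "r' \<noteq> 0" by (cases g)
  show ?thesis
  proof (cases "p = 0 \<or> p' = 0")
    case True
    with f g assms show ?thesis by (auto simp: rf_inv_sub_Fract poly_inv_sub_eq_reflect_poly eq_fract)
  next
    case False
    with f g assms show ?thesis
      by (simp add: rf_inv_sub_Fract poly_inv_sub_mult degree_mult_eq power_add mult_ac)
  qed
qed

lemma rf_inv_sub_rf_const: "c \<noteq> 0 \<Longrightarrow> rf_inv_sub c (rf_const e) = rf_const e"
  by (simp add: rf_const_def rf_inv_sub_Fract poly_inv_sub_eq_reflect_poly one_pCons)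

lemma rf_const_add: "rf_const (u + v) = rf_const u + rf_const v"
  by (simp add: rf_const_def)

lemma rf_const_mult: "rf_const (u * v) = rf_const u * rf_const v"
  by (simp add: rf_const_def mult.commute)

lemma rf_const_minus: "rf_const (- u) = - rf_const u"
  by (simp add: rf_const_def)

lemma rf_const_diff: "rf_const (u - v) = rf_const u - rf_const v"
  by (simp add: rf_const_def)

lemma rf_const_inject: "rf_const u = rf_const v \<longleftrightarrow> u = v"
  by (simp add: rf_const_def eq_fract)

lemma rf_const_eq_0_iff [simp]: "rf_const u = 0 \<longleftrightarrow> u = 0"
  by (simp add: rf_const_def eq_fract Zero_fract_def)

lemma rf_const_0 [simp]: "rf_const 0 = 0"
  by simp

lemma rf_const_1 [simp]: "rf_const 1 = 1"
  by (simp add: rf_const_def One_fract_def one_pCons)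

lemma rf_real_add: "rf_real (u + v) = rf_real u + rf_real v"
  by (simp add: rf_real_def rf_const_add)

lemma rf_real_mult: "rf_real (u * v) = rf_real u * rf_real v"
  by (simp add: rf_real_def rf_const_mult)

lemma rf_real_diff: "rf_real (u - v) = rf_real u - rf_real v"
  by (simp add: rf_real_def rf_const_diff)

lemma rf_real_power: "rf_real (u ^ n) = rf_real u ^ n"
  by (induct n) (simp_all add: rf_real_def rf_const_mult)

lemma rf_real_eq_0_iff [simp]: "rf_real u = 0 \<longleftrightarrow> u = 0"
  by (simp add: rf_real_def)

lemma rf_real_0 [simp]: "rf_real 0 = 0"
  by simp

lemma range_rf_const_if_quadratic_root:
  fixes x :: ratfun
  assumes nontrivial: "\<delta> \<noteq> 0 \<or> \<beta> \<noteq> 0"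
    and root: "rf_const \<delta> * x ^ 2 + rf_const \<beta> * x + rf_const \<gamma> = 0"
  shows "x \<in> range rf_const"
proof (cases "\<delta> = 0")
  case True
  with nontrivial have "\<beta> \<noteq> 0" by simp
  from True root have "rf_const \<beta> * x = rf_const \<beta> * rf_const (- \<gamma> / \<beta>)"
    using \<open>\<beta> \<noteq> 0\<close> by (simp add: rf_const_mult[symmetric] rf_const_minus add_eq_0_iff2)
  with \<open>\<beta> \<noteq> 0\<close> show ?thesis by simp
next
  case False
  define s where "s = csqrt (\<beta>\<^sup>2 - 4 * \<delta> * \<gamma>)"
  define r1 where "r1 = (- \<beta> + s) / (2 * \<delta>)"
  define r2 where "r2 = (- \<beta> - s) / (2 * \<delta>)"
  have "s\<^sup>2 = \<beta>\<^sup>2 - 4 * \<delta> * \<gamma>" unfolding s_def by simp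
  with False have vieta: "\<delta> * (r1 + r2) = - \<beta>" "\<delta> * (r1 * r2) = \<gamma>"
    unfolding r1_def r2_def by (simp_all add: field_simps power2_eq_square) algebra
  have "rf_const \<delta> * ((x - rf_const r1) * (x - rf_const r2))
     = rf_const \<delta> * x ^ 2 - rf_const (\<delta> * (r1 + r2)) * x + rf_const (\<delta> * (r1 * r2))"
    by (simp add: rf_const_mult rf_const_add algebra_simps power2_eq_square)
  with root vieta False have "(x - rf_const r1) * (x - rf_const r2) = 0" by (simp add: rf_const_minus)
  then show ?thesis by auto
qed

section \<open>Nonvanishing of the coefficients\<close>

lemma base_field_diff: "u \<in> base_field d a b \<Longrightarrow> v \<in> base_field d a b \<Longrightarrow> u - v \<in> base_field d a b"
  unfolding diff_conv_add_uminus by (intro bf_add bf_uminus)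

lemma base_field_divide: "u \<in> base_field d a b \<Longrightarrow> v \<in> base_field d a b \<Longrightarrow> u / v \<in> base_field d a b"
  unfolding divide_inverse by (intro bf_mult bf_inverse)

lemma base_field_1: "1 \<in> base_field d a b"
  by (rule bf_rat) simp

lemma transcendental_no_quadratic_relation:
  assumes "transcendental_over (base_field d a b) t"
    and "u \<in> base_field d a b" "v \<in> base_field d a b" "v \<noteq> 0"
  shows "u \<noteq> v * t\<^sup>2"
proof
  assume relation: "u = v * t\<^sup>2"
  let ?p = "[:u, 0, - v:]"
  have "\<forall>i. coeff ?p i \<in> base_field d a b"
    using assms(2,3) by (auto simp: coeff_pCons bf_rat bf_uminus split: nat.splits)
  moreover have "?p \<noteq> 0" using \<open>v \<noteq> 0\<close> by simp
  moreover have "poly ?p t = 0" using relation by (simp add: power2_eq_square)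
  ultimately show False using assms(1) unfolding transcendental_over_def by blast
qed

lemma transcendental_nonzero:
  assumes "transcendental_over (base_field d a b) t"
  shows "t \<noteq> 0"
  using transcendental_no_quadratic_relation[OF assms bf_rat bf_rat, of 0 1] by simp

lemma gamma_form_eq_0_imp_relation:
  fixes X Y :: ratfun and A D1 D2 E F G t :: real
  assumes kernel: "X * Y = rf_real t * (rf_real D2 * Y\<^sup>2 + rf_real D1 * X\<^sup>2
                  + X * Y * (rf_real E * Y + rf_real F * X + rf_real G * X * Y))"
    and nonconst: "X \<notin> range rf_const \<or> Y \<notin> range rf_const"
    and nonzero: "t \<noteq> 0" "D1 \<noteq> 0" "D2 \<noteq> 0"
    and vanishing: "rf_real A / X = rf_real (t * D1) / Y"
  shows "A - A\<^sup>2 = D1 * D2 * t\<^sup>2"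
proof -
  have "X \<noteq> 0"
  proof
    assume "X = 0"
    with kernel nonzero have "Y = 0" by simp
    with \<open>X = 0\<close> nonconst show False by (metis rangeI rf_const_0)
  qed
  moreover have "Y \<noteq> 0"
    using kernel nonzero \<open>X \<noteq> 0\<close> by (cases "Y = 0") simp_all
  ultimately have proportional: "rf_real A * Y = rf_real (t * D1) * X"
    using vanishing by (simp add: field_simps)
  with nonzero \<open>X \<noteq> 0\<close> have "A \<noteq> 0" by (auto simp: rf_real_mult)
  define k where "k = t * D1 / A"
  have "rf_real (t * D1) = rf_real A * rf_real k"
    using \<open>A \<noteq> 0\<close> unfolding k_def rf_real_mult[symmetric] by simp
  with proportional \<open>A \<noteq> 0\<close> have Y: "Y = rf_real k * X"
    by simp
  \<comment> \<open>On the line Y = kX the kernel equation becomes a quadratic in X with constant coefficients.\<close>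
  define \<delta> where "\<delta> = t * G * k\<^sup>2"
  define \<beta> where "\<beta> = t * (E * k\<^sup>2 + F * k)"
  define \<gamma> where "\<gamma> = t * (D2 * k\<^sup>2 + D1) - k"
  have "X\<^sup>2 * (rf_real \<delta> * X\<^sup>2 + rf_real \<beta> * X + rf_real \<gamma>) =
      rf_real t * (rf_real D2 * Y\<^sup>2 + rf_real D1 * X\<^sup>2
                  + X * Y * (rf_real E * Y + rf_real F * X + rf_real G * X * Y)) - X * Y"
    unfolding Y \<delta>_def \<beta>_def \<gamma>_def
    by (simp add: rf_real_mult rf_real_add rf_real_diff rf_real_power) algebra
  with kernel \<open>X \<noteq> 0\<close> have quadratic: "rf_real \<delta> * X\<^sup>2 + rf_real \<beta> * X + rf_real \<gamma> = 0"
    by simp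
  have "\<delta> = 0 \<and> \<beta> = 0"
  proof (rule ccontr)
    assume "\<not> (\<delta> = 0 \<and> \<beta> = 0)"
    with quadratic have "X \<in> range rf_const"
      unfolding rf_real_def by (intro range_rf_const_if_quadratic_root[of "of_real \<delta>" "of_real \<beta>"]) auto
    with Y nonconst show False
      unfolding rf_real_def by (auto simp: rf_const_mult[symmetric])
  qed
  with quadratic have "k = t * (D2 * k\<^sup>2 + D1)"
    unfolding \<gamma>_def by simp
  with \<open>A \<noteq> 0\<close> nonzero have "(D1 * t) * (A - A\<^sup>2 - D1 * D2 * t\<^sup>2) = 0"
    unfolding k_def by (simp add: field_simps power2_eq_square)
  with nonzero show ?thesis by simp
qed

lemma gamma_form_nonzero:
  fixes X Y :: ratfun and A D1 D2 E F G :: real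
  assumes kernel: "X * Y = rf_real t * (rf_real D2 * Y\<^sup>2 + rf_real D1 * X\<^sup>2
                  + X * Y * (rf_real E * Y + rf_real F * X + rf_real G * X * Y))"
    and nonconst: "X \<notin> range rf_const \<or> Y \<notin> range rf_const"
    and transc: "transcendental_over (base_field d a b) t"
    and in_base_field: "A \<in> base_field d a b" "D1 \<in> base_field d a b" "D2 \<in> base_field d a b"
    and nonzero: "D1 \<noteq> 0" "D2 \<noteq> 0"
  shows "rf_real A / X - rf_real (t * D1) / Y \<noteq> 0"
proof
  assume "rf_real A / X - rf_real (t * D1) / Y = 0"
  with kernel nonconst transcendental_nonzero[OF transc] nonzero
  have "A - A\<^sup>2 = D1 * D2 * t\<^sup>2"
    by (intro gamma_form_eq_0_imp_relation) auto
  moreover have "A - A\<^sup>2 \<in> base_field d a b" "D1 * D2 \<in> base_field d a b"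
    using in_base_field by (auto simp: power2_eq_square intro: base_field_diff bf_mult)
  ultimately show False
    using transcendental_no_quadratic_relation[OF transc] nonzero by auto
qed

lemma genus_zero_kernel_sum:
  fixes w :: "int \<Rightarrow> int \<Rightarrow> 'a::comm_ring_1"
  assumes "S \<in> genus_zero_step_sets" and "\<forall>i j. (i, j) \<notin> S \<longrightarrow> w i j = 0"
  shows "(\<Sum>(i, j) \<in> S. w i j * x ^ nat (i + 1) * y ^ nat (j + 1))
       = w (-1) 1 * y\<^sup>2 + w 1 (-1) * x\<^sup>2 + x * y * (w 0 1 * y + w 1 0 * x + w 1 1 * x * y)"
proof -
  let ?U = "{(-1, 1), (1, -1), (0, 1), (1, 0), (1, 1)} :: (int \<times> int) set"
  have "S \<subseteq> ?U" using assms(1) unfolding genus_zero_step_sets_def by auto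
  with assms(2) have "(\<Sum>(i, j) \<in> S. w i j * x ^ nat (i + 1) * y ^ nat (j + 1))
      = (\<Sum>(i, j) \<in> ?U. w i j * x ^ nat (i + 1) * y ^ nat (j + 1))"
    by (intro sum.mono_neutral_left) auto
  also have "\<dots> = w (-1) 1 * y\<^sup>2 + w 1 (-1) * x\<^sup>2 + x * y * (w 0 1 * y + w 1 0 * x + w 1 1 * x * y)"
    by (simp add: algebra_simps power2_eq_square)
  finally show ?thesis .
qed

lemma gamma1_nonzero:
  assumes kernel: "x * y = rf_real t * (rf_real (d (-1) 1) * y\<^sup>2 + rf_real (d 1 (-1)) * x\<^sup>2
       + x * y * (rf_real (d 0 1) * y + rf_real (d 1 0) * x + rf_real (d 1 1) * x * y))"
    and nonconst: "x \<notin> range rf_const \<or> y \<notin> range rf_const"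
    and transc: "transcendental_over (base_field d a b) t"
    and nonzero: "d 1 (-1) \<noteq> 0" "d (-1) 1 \<noteq> 0"
  shows "gamma1 d a t x y \<noteq> 0"
  unfolding gamma1_def
  by (rule gamma_form_nonzero[OF kernel nonconst transc])
     (intro base_field_diff base_field_divide base_field_1 bf_a bf_d nonzero)+

lemma gamma2_nonzero:
  assumes kernel: "x * y = rf_real t * (rf_real (d (-1) 1) * y\<^sup>2 + rf_real (d 1 (-1)) * x\<^sup>2
       + x * y * (rf_real (d 0 1) * y + rf_real (d 1 0) * x + rf_real (d 1 1) * x * y))"
    and nonconst: "x \<notin> range rf_const \<or> y \<notin> range rf_const"
    and transc: "transcendental_over (base_field d a b) t"
    and nonzero: "d 1 (-1) \<noteq> 0" "d (-1) 1 \<noteq> 0"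
  shows "gamma2 d b t x y \<noteq> 0"
proof -
  have "rf_real t * (rf_real (d 1 (-1)) * x\<^sup>2 + rf_real (d (-1) 1) * y\<^sup>2
       + y * x * (rf_real (d 1 0) * x + rf_real (d 0 1) * y + rf_real (d 1 1) * y * x))
      = rf_real t * (rf_real (d (-1) 1) * y\<^sup>2 + rf_real (d 1 (-1)) * x\<^sup>2
       + x * y * (rf_real (d 0 1) * y + rf_real (d 1 0) * x + rf_real (d 1 1) * x * y))"
    by algebra
  with kernel have "y * x = rf_real t * (rf_real (d 1 (-1)) * x\<^sup>2 + rf_real (d (-1) 1) * y\<^sup>2
       + y * x * (rf_real (d 1 0) * x + rf_real (d 0 1) * y + rf_real (d 1 1) * y * x))"
    by (metis mult.commute)
  moreover from nonconst have "y \<notin> range rf_const \<or> x \<notin> range rf_const" by blast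
  ultimately show ?thesis
    unfolding gamma2_def
    by (rule gamma_form_nonzero[OF _ _ transc])
       (intro base_field_diff base_field_divide base_field_1 bf_b bf_d nonzero)+
qed

section \<open>Anti-invariant solutions\<close>

lemma linear_relation_solutions_proportional:
  fixes g1 g2 :: "'a::field"
  assumes "g1 \<noteq> 0" "g2 \<noteq> 0"
    and reference: "g1 * h1' + g2 * h2' = 0" "(h1', h2') \<noteq> (0, 0)"
    and solution: "g1 * h1 + g2 * h2 = 0"
  shows "h1' \<noteq> 0" "h2' \<noteq> 0" "h1 = h1 / h1' * h1'" "h2 = h1 / h1' * h2'"
proof -
  from assms show "h1' \<noteq> 0" "h2' \<noteq> 0" by auto
  then show "h1 = h1 / h1' * h1'" by simp
  from reference solution have "g1 * h1 = - (g2 * h2)" "g1 * h1' = - (g2 * h2')"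
    by (simp_all add: eq_neg_iff_add_eq_0)
  then have "g1 * (h1 * h2' - h2 * h1') = (- (g2 * h2)) * h2' - (- (g2 * h2')) * h2"
    by (metis mult.assoc mult.commute right_diff_distrib)
  then have "g1 * (h1 * h2' - h2 * h1') = 0"
    by (simp add: algebra_simps)
  with \<open>g1 \<noteq> 0\<close> \<open>h1' \<noteq> 0\<close> show "h2 = h1 / h1' * h2'"
    by (simp add: field_simps)
qed

lemma iota1_mult: "iota1 (u * v) = iota1 u * iota1 v"
  unfolding iota1_def by (simp add: rf_inv_sub_mult)

lemma iota2_mult: "q \<noteq> 0 \<Longrightarrow> iota2 q (u * v) = iota2 q u * iota2 q v"
  unfolding iota2_def by (simp add: rf_inv_sub_mult)

lemma iota1_rf_const: "iota1 (rf_const c) = rf_const c"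
  unfolding iota1_def by (simp add: rf_inv_sub_rf_const)

lemma iota2_rf_const: "q \<noteq> 0 \<Longrightarrow> iota2 q (rf_const c) = rf_const c"
  unfolding iota2_def by (simp add: rf_inv_sub_rf_const)

lemma multiplier_parity:
  fixes \<sigma> :: "'a::field \<Rightarrow> 'a"
  assumes mult: "\<sigma> (f * h) = \<sigma> f * \<sigma> h" and "h \<noteq> 0" and odd: "\<sigma> (f * h) = - (f * h)"
  shows "\<sigma> h = h \<Longrightarrow> \<sigma> f = - f" and "\<sigma> h = - h \<Longrightarrow> \<sigma> f = f"
proof -
  from mult odd have "\<sigma> f * \<sigma> h = - f * h" by simp
  with \<open>h \<noteq> 0\<close> show "\<sigma> h = h \<Longrightarrow> \<sigma> f = - f" and "\<sigma> h = - h \<Longrightarrow> \<sigma> f = f"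
    by (metis mult_right_cancel, simp)
qed

lemma range_rf_const_if_square:
  assumes "f * f = rf_const c"
  shows "f \<in> range rf_const"
  using assms
  by (intro range_rf_const_if_quadratic_root[where \<delta> = 1 and \<beta> = 0 and \<gamma> = "- c"])
     (simp_all add: rf_const_minus power2_eq_square)

lemma odd_multiplier_eq_0:
  fixes \<sigma>1 \<sigma>2 :: "ratfun \<Rightarrow> ratfun"
  assumes mult: "\<And>u v. \<sigma>1 (u * v) = \<sigma>1 u * \<sigma>1 v" "\<And>u v. \<sigma>2 (u * v) = \<sigma>2 u * \<sigma>2 v"
    and const: "\<And>c. \<sigma>1 (rf_const c) = rf_const c" "\<And>c. \<sigma>2 (rf_const c) = rf_const c"
    and fixed_const: "\<forall>f. \<sigma>1 f = f \<and> \<sigma>2 f = f \<longrightarrow> f \<in> range rf_const"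
    and parity: "\<sigma>1 f = f \<or> \<sigma>1 f = - f" "\<sigma>2 f = f \<or> \<sigma>2 f = - f"
    and odd: "\<sigma>1 f = - f \<or> \<sigma>2 f = - f"
  shows "f = 0"
proof -
  from parity mult have "\<sigma>1 (f * f) = f * f \<and> \<sigma>2 (f * f) = f * f" by auto
  with fixed_const obtain c where "f * f = rf_const c" by blast
  then obtain e where e: "f = rf_const e" using range_rf_const_if_square by blast
  with odd const have "f = - f" by auto
  with e have "rf_const e = rf_const (- e)" by (simp add: rf_const_minus)
  with e show ?thesis by (simp add: rf_const_inject)
qed

theorem lemma3p3:
  fixes S :: "(int \<times> int) set" and d :: "int \<Rightarrow> int \<Rightarrow> real"
    and a b t q :: real and x y h1' h2' :: ratfun
  assumes steps: "S \<in> genus_zero_step_sets"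
    and weights_pos: "\<forall>(i, j) \<in> S. d i j > 0"
    and weights_zero: "\<forall>i j. (i, j) \<notin> S \<longrightarrow> d i j = 0"
    and a_pos: "a > 0" and b_pos: "b > 0"
    and t_transc: "transcendental_over (base_field d a b) t"
    and q_nonzero: "q \<noteq> 0"
    and q_not_root_of_unity: "\<forall>n::nat. n > 0 \<longrightarrow> q ^ n \<noteq> 1"
    and kernel: "x * y = rf_real t * (\<Sum>(i, j) \<in> S. rf_real (d i j) * x ^ nat (i + 1) * y ^ nat (j + 1))"
    and nonconst: "x \<notin> range rf_const \<or> y \<notin> range rf_const"
    and x_inv: "iota1 x = x"
    and y_inv: "iota2 q y = y"
    and fixed_const: "\<forall>f. iota1 f = f \<and> iota2 q f = f \<longrightarrow> f \<in> range rf_const"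
    and h'_nonzero: "(h1', h2') \<noteq> (0, 0)"
    and h'_eq: "gamma1 d a t x y * h1' + gamma2 d b t x y * h2' = 0"
    and h1'_sym: "iota1 h1' = h1' \<or> iota1 h1' = - h1'"
    and h2'_sym: "iota2 q h2' = h2' \<or> iota2 q h2' = - h2'"
    and h'_even: "iota1 h1' = h1' \<or> iota2 q h2' = h2'"
  shows "\<forall>h1 h2. gamma1 d a t x y * h1 + gamma2 d b t x y * h2 = 0
                 \<and> iota1 h1 = - h1 \<and> iota2 q h2 = - h2
                 \<longrightarrow> (h1, h2) = (0, 0)"
proof (intro allI impI)
  fix h1 h2
  assume "gamma1 d a t x y * h1 + gamma2 d b t x y * h2 = 0 \<and> iota1 h1 = - h1 \<and> iota2 q h2 = - h2"
  then have solution: "gamma1 d a t x y * h1 + gamma2 d b t x y * h2 = 0"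
    and odd: "iota1 h1 = - h1" "iota2 q h2 = - h2" by auto
  have weights: "d 1 (-1) \<noteq> 0" "d (-1) 1 \<noteq> 0"
    using steps weights_pos unfolding genus_zero_step_sets_def by auto
  have "x * y = rf_real t * (rf_real (d (-1) 1) * y\<^sup>2 + rf_real (d 1 (-1)) * x\<^sup>2
       + x * y * (rf_real (d 0 1) * y + rf_real (d 1 0) * x + rf_real (d 1 1) * x * y))"
    using kernel genus_zero_kernel_sum[OF steps, of "\<lambda>i j. rf_real (d i j)"] weights_zero by simp
  from gamma1_nonzero[OF this nonconst t_transc weights] gamma2_nonzero[OF this nonconst t_transc weights]
  have "gamma1 d a t x y \<noteq> 0" "gamma2 d b t x y \<noteq> 0" .
  from linear_relation_solutions_proportional[OF this h'_eq h'_nonzero solution]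
  obtain f where "h1' \<noteq> 0" "h2' \<noteq> 0" and h: "h1 = f * h1'" "h2 = f * h2'" by blast
  with odd have "iota1 (f * h1') = - (f * h1')" "iota2 q (f * h2') = - (f * h2')" by simp_all
  note parity1 = multiplier_parity[OF iota1_mult \<open>h1' \<noteq> 0\<close> this(1)]
    and parity2 = multiplier_parity[OF iota2_mult[OF q_nonzero] \<open>h2' \<noteq> 0\<close> this(2)]
  have "iota1 f = f \<or> iota1 f = - f" using h1'_sym parity1 by blast
  moreover have "iota2 q f = f \<or> iota2 q f = - f" using h2'_sym parity2 by blast
  moreover have "iota1 f = - f \<or> iota2 q f = - f" using h'_even parity1(1) parity2(1) by blast
  ultimately have "f = 0"
    by (rule odd_multiplier_eq_0[OF iota1_mult iota2_mult[OF q_nonzero]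
          iota1_rf_const iota2_rf_const[OF q_nonzero] fixed_const])
  with h show "(h1, h2) = (0, 0)" by simp
qed

end
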